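(* Consider a two-player matrix game between a player $\mathrm{SV}$ (the group of surrounding vehicles) and a player $\mathrm{EV}$ (the ego vehicle). Player $\mathrm{SV}$ has exactly two actions $\pi_{\mathrm{SV}}^1$ (``Assert'') and $\pi_{\mathrm{SV}}^2$ (``Yield''); player $\mathrm{EV}$ has finitely many actions $\pi_{\mathrm{EV}}^1,\dots,\pi_{\mathrm{EV}}^{M_{\mathrm{EV}}}$. For each $i\in\{1,2\}$ and $m\in\{1,\dots,M_{\mathrm{EV}}\}$ let $J_{\mathrm{SV}}^{im}$ and $J_{\mathrm{EV}}^{im}$ be real numbers (the costs of $\mathrm{SV}$ and $\mathrm{EV}$ under the action tuple $(\pi_{\mathrm{SV}}^i,\pi_{\mathrm{EV}}^m)$). Let $b(\pi_{\mathrm{SV}}^1), b(\pi_{\mathrm{SV}}^2)\in[0,1]$ with $b(\pi_{\mathrm{SV}}^1)+b(\pi_{\mathrm{SV}}^2)=1$, and define the modified cost of $\mathrm{SV}$ by $\bar J_{\mathrm{SV}}^{im}:=(1-b(\pi_{\mathrm{SV}}^i))J_{\mathrm{SV}}^{im}$; the cost of $\mathrm{EV}$ is $J_{\mathrm{EV}}^{im}$. Assume that the inequalities $0\le J_{\mathrm{SV}}^{1m}\le J_{\mathrm{SV}}^{2m}$ and $J_{\mathrm{EV}}^{1m}\ge J_{\mathrm{EV}}^{2m}\ge 0$ hold for all $m\in\{1,\dots,M_{\mathrm{EV}}\}$ (for all feasible action tuples). If for some $p\in\{1,\dots,M_{\mathrm{EV}}\}$ the action tuple $(\pi_{\mathrm{SV}}^2,\pi_{\mathrm{EV}}^p)$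 is a pure-strategy Nash equilibrium, then it is also a Stackelberg equilibrium with $\mathrm{EV}$ as the leader (and $\mathrm{SV}$ as the follower).
   Context: An action tuple is called feasible if the corresponding simulated multi-vehicle trajectories are collision-free; it is assumed that at least one feasible action tuple exists. A pure-strategy Nash equilibrium is an action tuple from which no player can lower its own cost (modified cost $\bar J_{\mathrm{SV}}$ for $\mathrm{SV}$, $J_{\mathrm{EV}}$ for $\mathrm{EV}$) by unilaterally changing its action. A Stackelberg equilibrium with leader $\mathrm{L}$ and follower $\mathrm{F}$ is a pair $\{\pi_{\mathrm{L}}^*,\pi_{\mathrm{F}}^*(\cdot)\}$ such that $\pi_{\mathrm{F}}^*(\pi_{\mathrm{L}})\in\arg\min_{\pi_{\mathrm{F}}}J_{\mathrm{F}}(\pi_{\mathrm{L}},\pi_{\mathrm{F}})$ for every leader action $\pi_{\mathrm{L}}$ and $\pi_{\mathrm{L}}^*\in\arg\min_{\pi_{\mathrm{L}}}J_{\mathrm{L}}(\pi_{\mathrm{L}},\pi_{\mathrm{F}}^*(\pi_{\mathrm{L}}))$; here the leader is $\mathrm{EV}$ with cost $J_{\mathrm{EV}}$ and the follower is $\mathrm{SV}$ with cost $\bar J_{\mathrm{SV}}$, and the action tuple is $(\pi_{\mathrm{F}}^*(\pi_{\mathrm{L}}^* ),\pi_{\mathrm{L}}^* )$. The number $b(\pi_{\mathrm{SV}}^i)$ is the belief that the surrounding vehicles take action $\pi_{\mathrm{SV}}^i$. *)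

theory Defs
  imports Complex_Main
begin

definition modified_cost :: "(nat \<Rightarrow> real) \<Rightarrow> (nat \<Rightarrow> nat \<Rightarrow> real) \<Rightarrow> nat \<Rightarrow> nat \<Rightarrow> real" where
  "modified_cost b JSV i m = (1 - b i) * JSV i m"

definition pure_nash :: "nat set \<Rightarrow> nat set \<Rightarrow> (nat \<Rightarrow> nat \<Rightarrow> real) \<Rightarrow> (nat \<Rightarrow> nat \<Rightarrow> real)
    \<Rightarrow> nat \<Rightarrow> nat \<Rightarrow> bool" where
  "pure_nash AS AE JS JE i m \<longleftrightarrow> i \<in> AS \<and> m \<in> AE \<and>
     (\<forall>i'\<in>AS. JS i m \<le> JS i' m) \<and> (\<forall>m'\<in>AE. JE i m \<le> JE i m')"

definition stackelberg_EV_leader :: "nat set \<Rightarrow> nat set \<Rightarrow> (nat \<Rightarrow> nat \<Rightarrow> real) \<Rightarrow> (nat \<Rightarrow> nat \<Rightarrow> real)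
    \<Rightarrow> nat \<Rightarrow> nat \<Rightarrow> bool" where
  "stackelberg_EV_leader AS AE JS JE i m \<longleftrightarrow>
     (\<exists>f. (\<forall>l\<in>AE. f l \<in> AS \<and> (\<forall>i'\<in>AS. JS (f l) l \<le> JS i' l)) \<and>
          m \<in> AE \<and> (\<forall>l\<in>AE. JE (f m) m \<le> JE (f l) l) \<and> f m = i)"

end

theory Submission
  imports Defs
begin

(* Yielding is, for every EV action, the SV response that is cheapest for EV, and the Nash
   condition says that p is EV's best reply to yielding. Hence no EV action can cost less
   than (Yield, p), whatever the SV best response to it is; at p itself the Nash condition
   makes Yield an SV best response. *)

lemma follower_best_response_map_exists:
  fixes JS :: "'i \<Rightarrow> 'l \<Rightarrow> 'a::linorder"
  assumes "finite AS" "i \<in> AS" "\<forall>i'\<in>AS. JS i m \<le> JS i' m"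
  obtains f where "\<forall>l\<in>AE. f l \<in> AS \<and> (\<forall>i'\<in>AS. JS (f l) l \<le> JS i' l)" "f m = i"
proof -
  define f where "f l = (if l = m then i else arg_min_on (\<lambda>i'. JS i' l) AS)" for l
  have "AS \<noteq> {}" using \<open>i \<in> AS\<close> by blast
  have "\<forall>l\<in>AE. f l \<in> AS \<and> (\<forall>i'\<in>AS. JS (f l) l \<le> JS i' l)"
  proof (intro ballI conjI)
    fix l
    show "f l \<in> AS"
      using \<open>i \<in> AS\<close>
      by (simp add: f_def arg_min_if_finite(1)[OF \<open>finite AS\<close> \<open>AS \<noteq> {}\<close>])
    fix i' assume "i' \<in> AS"
    then show "JS (f l) l \<le> JS i' l"
      using assms(3)
      by (simp add: f_def
          arg_min_least[where f = "\<lambda>j. JS j l", OF \<open>finite AS\<close> \<open>AS \<noteq> {}\<close> \<open>i' \<in> AS\<close>])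
  qed
  moreover have "f m = i" unfolding f_def by simp
  ultimately show thesis by (rule that)
qed

lemma pure_nash_imp_stackelberg_EV_leader:
  assumes "finite AS"
    and nash: "pure_nash AS AE JS JE i m"
    and favourable: "\<forall>l\<in>AE. \<forall>i'\<in>AS. JE i l \<le> JE i' l"
  shows "stackelberg_EV_leader AS AE JS JE i m"
proof -
  from nash have "i \<in> AS" "m \<in> AE" and follower_best: "\<forall>i'\<in>AS. JS i m \<le> JS i' m"
    and leader_best: "\<forall>l\<in>AE. JE i m \<le> JE i l"
    unfolding pure_nash_def by auto
  obtain f where f: "\<forall>l\<in>AE. f l \<in> AS \<and> (\<forall>i'\<in>AS. JS (f l) l \<le> JS i' l)" and "f m = i"
    using follower_best_response_map_exists[where JS = JS and m = m and AE = AE,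
        OF \<open>finite AS\<close> \<open>i \<in> AS\<close> follower_best] .
  have "JE (f m) m \<le> JE (f l) l" if "l \<in> AE" for l
  proof -
    have "JE (f m) m = JE i m" using \<open>f m = i\<close> by simp
    also have "\<dots> \<le> JE i l" using leader_best that by blast
    also have "\<dots> \<le> JE (f l) l" using favourable f that by blast
    finally show ?thesis .
  qed
  then show ?thesis
    unfolding stackelberg_EV_leader_def using f \<open>m \<in> AE\<close> \<open>f m = i\<close> by blast
qed

theorem proposition2:
  fixes M :: nat and JSV JEV :: "nat \<Rightarrow> nat \<Rightarrow> real" and b :: "nat \<Rightarrow> real" and p :: nat
  assumes b1: "0 \<le> b 1" "b 1 \<le> 1"
    and b2: "0 \<le> b 2" "b 2 \<le> 1"
    and bsum: "b 1 + b 2 = 1"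
    and SV_ineq: "\<forall>m\<in>{1..M}. 0 \<le> JSV 1 m \<and> JSV 1 m \<le> JSV 2 m"
    and EV_ineq: "\<forall>m\<in>{1..M}. JEV 1 m \<ge> JEV 2 m \<and> JEV 2 m \<ge> 0"
    and p: "p \<in> {1..M}"
    and nash: "pure_nash {1, 2} {1..M} (modified_cost b JSV) JEV 2 p"
  shows "stackelberg_EV_leader {1, 2} {1..M} (modified_cost b JSV) JEV 2 p"
proof (rule pure_nash_imp_stackelberg_EV_leader[OF _ nash])
  show "\<forall>l\<in>{1..M}. \<forall>i'\<in>{1, 2}. JEV 2 l \<le> JEV i' l"
    using EV_ineq by auto
qed simp

end
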